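(* Let $G$ be a commutative group and $f_1,f_2$ bijections of $G$ such that $G(f_1)$ and $G(f_2)$ are not groups. Then $G(f_1)\cong G(f_2)$ if and only if there is $\psi\in\mathrm{Aut}(G)$ such that $$f_2^{-1}\psi f_1(x)=f_2^{-1}\psi f_1(1)\cdot\psi(x)\quad\text{for all }x\in G,$$ and $f_2^{-1}\psi f_1(1)$ is a square in $G$.
   Context: Construction $G(f)$: for a commutative group $G$ (written multiplicatively) and a bijection $f:G\to G$, let $\overline{G}=\{\overline{x}:x\in G\}$ be a disjoint copy of $G$, and let $G(f)$ be the set $G\cup\overline{G}$ with multiplication $*$ defined for $x,y\in G$ by $x*y=xy$, $x*\overline{y}=\overline{xy}$, $\overline{x}*y=\overline{xy}$, $\overline{x}*\overline{y}=f(xy)$. It is a commutative loop (a set with a binary operation, neutral element $1$, and bijective left and right translations). *)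

theory Defs
  imports "HOL-Algebra.Algebra"
begin

text \<open>The loop G(f): carrier is a disjoint union of G (tagged Inl) and a copy
  of G (tagged Inr x standing for x-bar).\<close>

fun Gf_mult :: "('a, 'b) monoid_scheme \<Rightarrow> ('a \<Rightarrow> 'a) \<Rightarrow> 'a + 'a \<Rightarrow> 'a + 'a \<Rightarrow> 'a + 'a" where
  "Gf_mult G f (Inl x) (Inl y) = Inl (x \<otimes>\<^bsub>G\<^esub> y)"
| "Gf_mult G f (Inl x) (Inr y) = Inr (x \<otimes>\<^bsub>G\<^esub> y)"
| "Gf_mult G f (Inr x) (Inl y) = Inr (x \<otimes>\<^bsub>G\<^esub> y)"
| "Gf_mult G f (Inr x) (Inr y) = Inl (f (x \<otimes>\<^bsub>G\<^esub> y))"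

definition Gf :: "('a, 'b) monoid_scheme \<Rightarrow> ('a \<Rightarrow> 'a) \<Rightarrow> ('a + 'a) monoid" where
  "Gf G f = \<lparr> carrier = Inl ` carrier G \<union> Inr ` carrier G,
             monoid.mult = Gf_mult G f,
             one = Inl \<one>\<^bsub>G\<^esub> \<rparr>"

end

theory Submission imports Defs begin

(* The proof rests on one rigidity fact: if some barred element b-bar associates
   with itself and every other barred element, then f is a translation t |-> c t,
   and then G(f) is a group.  Since in G(f1) every unbarred element associates with
   everything, a surjective homomorphism G(f1) -> G(f2) into a non-group G(f2) must
   map the copy of G into the copy of G.  Hence an isomorphism phi has the shape
   phi(x) = psi(x), phi(x-bar) = (psi(x) d)-bar for an automorphism psi of G and
   some d in G, and comparing phi(w-bar * 1-bar) on both sides yields the twist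
   condition  psi(f1 w) = f2(d d psi(w)).  Conversely every such pair (psi, d)
   defines an isomorphism.  Finally, the twist condition is rewritten with the
   inverse of f2, which gives the form stated in the theorem. *)

lemma Gf_carrier [simp]:
  "Inl x \<in> carrier (Gf G f) \<longleftrightarrow> x \<in> carrier G"
  "Inr x \<in> carrier (Gf G f) \<longleftrightarrow> x \<in> carrier G"
  by (auto simp: Gf_def)

lemma Gf_mult [simp]: "x \<otimes>\<^bsub>Gf G f\<^esub> y = Gf_mult G f x y"
  by (simp add: Gf_def)

lemma Gf_one [simp]: "\<one>\<^bsub>Gf G f\<^esub> = Inl \<one>\<^bsub>G\<^esub>"
  by (simp add: Gf_def)

lemma Gf_carrier_cases:
  assumes "u \<in> carrier (Gf G f)"
  obtains x where "x \<in> carrier G" "u = Inl x" | x where "x \<in> carrier G" "u = Inr x"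
  using assms by (auto simp: Gf_def)

lemma Gf_mult_closed:
  fixes G (structure)
  assumes "monoid G" and "\<And>t. t \<in> carrier G \<Longrightarrow> f t \<in> carrier G"
    and "u \<in> carrier (Gf G f)" "v \<in> carrier (Gf G f)"
  shows "Gf_mult G f u v \<in> carrier (Gf G f)"
  using assms(3,4) by (auto elim!: Gf_carrier_cases simp: assms(2) monoid.m_closed[OF assms(1)])

section \<open>When G(f) is a group\<close>

lemma Gf_translation_group:
  fixes G (structure)
  assumes "comm_group G" and c: "c \<in> carrier G"
    and f: "\<And>t. t \<in> carrier G \<Longrightarrow> f t = c \<otimes> t"
  shows "group (Gf G f)"
proof -
  interpret comm_group G by fact
  have f_closed: "f t \<in> carrier G" if "t \<in> carrier G" for t
    using that c by (simp add: f)
  show ?thesis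
  proof (rule groupI)
    fix u v w assume "u \<in> carrier (Gf G f)" "v \<in> carrier (Gf G f)" "w \<in> carrier (Gf G f)"
    then show "u \<otimes>\<^bsub>Gf G f\<^esub> v \<otimes>\<^bsub>Gf G f\<^esub> w = u \<otimes>\<^bsub>Gf G f\<^esub> (v \<otimes>\<^bsub>Gf G f\<^esub> w)"
      using c by (auto elim!: Gf_carrier_cases simp: f m_ac)
  next
    fix u assume u: "u \<in> carrier (Gf G f)"
    then show "\<exists>v \<in> carrier (Gf G f). v \<otimes>\<^bsub>Gf G f\<^esub> u = \<one>\<^bsub>Gf G f\<^esub>"
    proof (cases rule: Gf_carrier_cases)
      case (1 a)
      then show ?thesis by (intro bexI[of _ "Inl (inv a)"]) auto
    next
      case (2 a)
      then have "f (inv c \<otimes> inv a \<otimes> a) = \<one>"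
        using c by (simp add: m_assoc f)
      then show ?thesis using 2 c by (intro bexI[of _ "Inr (inv c \<otimes> inv a)"]) auto
    qed
  qed (auto simp: Gf_mult_closed[OF monoid_axioms f_closed] elim!: Gf_carrier_cases)
qed

text \<open>The rigidity fact: if one barred element b-bar satisfies
  (b-bar b-bar) k-bar = b-bar (b-bar k-bar) for all k, then f is the translation by
  b^-2 f(b^2), so G(f) is a group.\<close>

lemma Gf_group_if_bar_associates:
  fixes G (structure)
  assumes "comm_group G" and f_closed: "\<And>t. t \<in> carrier G \<Longrightarrow> f t \<in> carrier G"
    and b: "b \<in> carrier G"
    and assoc: "\<And>k. k \<in> carrier G \<Longrightarrow>
      Gf_mult G f (Gf_mult G f (Inr b) (Inr b)) (Inr k) = Gf_mult G f (Inr b) (Gf_mult G f (Inr b) (Inr k))"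
  shows "group (Gf G f)"
proof -
  interpret comm_group G by fact
  define c where "c = inv b \<otimes> inv b \<otimes> f (b \<otimes> b)"
  have shift: "f (b \<otimes> b) \<otimes> k = b \<otimes> f (b \<otimes> k)" if "k \<in> carrier G" for k
    using assoc[OF that] by simp
  have "f t = c \<otimes> t" if t: "t \<in> carrier G" for t
  proof -
    have "f t = inv b \<otimes> (b \<otimes> f t)"
      using b t f_closed by (simp add: m_assoc[symmetric])
    also have "b \<otimes> f t = b \<otimes> f (b \<otimes> (inv b \<otimes> t))"
      using b t by (simp add: m_assoc[symmetric])
    also have "\<dots> = f (b \<otimes> b) \<otimes> (inv b \<otimes> t)"
      using shift[of "inv b \<otimes> t"] b t by simp
    finally show ?thesis using b t f_closed by (simp add: c_def m_ac)
  qed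
  moreover have "c \<in> carrier G" using b f_closed by (simp add: c_def)
  ultimately show ?thesis by (intro Gf_translation_group[OF assms(1)])
qed

section \<open>Shape of homomorphisms and isomorphisms\<close>

text \<open>Unbarred elements of G(f1) associate with everything; their images under a
  surjective homomorphism inherit this, so by the rigidity fact they cannot be barred
  elements when G(f2) is not a group.\<close>

lemma Gf_hom_maps_base_to_base:
  fixes G (structure)
  assumes G: "comm_group G" and f2_closed: "\<And>t. t \<in> carrier G \<Longrightarrow> f2 t \<in> carrier G"
    and \<phi>: "\<phi> \<in> hom (Gf G f1) (Gf G f2)" and surj: "\<phi> ` carrier (Gf G f1) = carrier (Gf G f2)"
    and not_group: "\<not> group (Gf G f2)" and x: "x \<in> carrier G"
  shows "\<phi> (Inl x) \<in> Inl ` carrier G"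
proof (rule ccontr)
  interpret comm_group G by fact
  have hm: "\<phi> (Gf_mult G f1 u v) = Gf_mult G f2 (\<phi> u) (\<phi> v)"
    if "u \<in> carrier (Gf G f1)" "v \<in> carrier (Gf G f1)" for u v
    using hom_mult[OF \<phi> that] by simp
  assume "\<phi> (Inl x) \<notin> Inl ` carrier G"
  moreover have "\<phi> (Inl x) \<in> carrier (Gf G f2)" using hom_in_carrier[OF \<phi>] x by simp
  ultimately obtain b where b: "b \<in> carrier G" "\<phi> (Inl x) = Inr b"
    by (auto elim: Gf_carrier_cases)
  have "Gf_mult G f2 (Gf_mult G f2 (Inr b) (Inr b)) (Inr k) = Gf_mult G f2 (Inr b) (Gf_mult G f2 (Inr b) (Inr k))"
    if k: "k \<in> carrier G" for k
  proof -
    have "Inr k \<in> \<phi> ` carrier (Gf G f1)" using surj k by simp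
    then obtain u where u: "u \<in> carrier (Gf G f1)" "\<phi> u = Inr k" by (metis imageE)
    have xx: "Gf_mult G f1 (Inl x) (Inl x) \<in> carrier (Gf G f1)" and x_carr: "Inl x \<in> carrier (Gf G f1)"
      using x by simp_all
    have xu: "Gf_mult G f1 (Inl x) u \<in> carrier (Gf G f1)"
      using u(1) x by (cases rule: Gf_carrier_cases) simp_all
    have "Gf_mult G f1 (Gf_mult G f1 (Inl x) (Inl x)) u = Gf_mult G f1 (Inl x) (Gf_mult G f1 (Inl x) u)"
      using u(1) x by (cases rule: Gf_carrier_cases) (simp_all add: m_assoc)
    moreover have "\<phi> (Gf_mult G f1 (Gf_mult G f1 (Inl x) (Inl x)) u) =
        Gf_mult G f2 (Gf_mult G f2 (Inr b) (Inr b)) (Inr k)"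
      using hm[OF xx u(1)] hm[OF x_carr x_carr] b u by simp
    moreover have "\<phi> (Gf_mult G f1 (Inl x) (Gf_mult G f1 (Inl x) u)) =
        Gf_mult G f2 (Inr b) (Gf_mult G f2 (Inr b) (Inr k))"
      using hm[OF x_carr xu] hm[OF x_carr u(1)] b u by simp
    ultimately show ?thesis by simp
  qed
  then have "group (Gf G f2)" by (intro Gf_group_if_bar_associates[OF G f2_closed b(1)])
  with not_group show False by contradiction
qed

lemma Gf_iso_shape:
  fixes G (structure)
  assumes G: "comm_group G" and f2_closed: "\<And>t. t \<in> carrier G \<Longrightarrow> f2 t \<in> carrier G"
    and \<phi>: "\<phi> \<in> iso (Gf G f1) (Gf G f2)" and not_group: "\<not> group (Gf G f2)"
  obtains \<psi> d where "\<psi> \<in> iso G G" "d \<in> carrier G"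
    "\<And>x. x \<in> carrier G \<Longrightarrow> \<phi> (Inl x) = Inl (\<psi> x)"
    "\<And>x. x \<in> carrier G \<Longrightarrow> \<phi> (Inr x) = Inr (\<psi> x \<otimes> d)"
proof -
  interpret comm_group G by fact
  have hom: "\<phi> \<in> hom (Gf G f1) (Gf G f2)" and surj: "\<phi> ` carrier (Gf G f1) = carrier (Gf G f2)"
    and inj: "inj_on \<phi> (carrier (Gf G f1))"
    using \<phi> by (auto simp: iso_iff)
  have hm: "\<phi> (Gf_mult G f1 u v) = Gf_mult G f2 (\<phi> u) (\<phi> v)"
    if "u \<in> carrier (Gf G f1)" "v \<in> carrier (Gf G f1)" for u v
    using hom_mult[OF hom that] by simp
  define \<psi> where "\<psi> x = projl (\<phi> (Inl x))" for x
  have base: "\<psi> x \<in> carrier G" "\<phi> (Inl x) = Inl (\<psi> x)" if "x \<in> carrier G" for x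
    using Gf_hom_maps_base_to_base[OF G f2_closed hom surj not_group that] by (auto simp: \<psi>_def)
  have shift: "\<phi> (Inr x) = Gf_mult G f2 (Inl (\<psi> x)) (\<phi> (Inr \<one>))" if "x \<in> carrier G" for x
    using hm[of "Inl x" "Inr \<one>"] base that by simp
  text \<open>If 1-bar went to an unbarred element, so would every barred element, and
    no barred element would be hit.\<close>
  obtain d where d: "d \<in> carrier G" "\<phi> (Inr \<one>) = Inr d"
  proof (rule Gf_carrier_cases[of "\<phi> (Inr \<one>)" G f2])
    show "\<phi> (Inr \<one>) \<in> carrier (Gf G f2)" using hom_in_carrier[OF hom] by simp
  next
    fix z assume z: "\<phi> (Inr \<one>) = Inl z"
    have "\<phi> u \<noteq> Inr \<one>" if "u \<in> carrier (Gf G f1)" for u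
      using that by (cases rule: Gf_carrier_cases) (simp_all add: base shift[unfolded z])
    moreover have "Inr \<one> \<in> \<phi> ` carrier (Gf G f1)" using surj by simp
    ultimately show thesis by (metis imageE)
  qed
  have bar: "\<phi> (Inr x) = Inr (\<psi> x \<otimes> d)" if "x \<in> carrier G" for x
    using shift[OF that, unfolded d(2)] base that by simp
  have "\<psi> \<in> iso G G"
    unfolding iso_iff
  proof (intro conjI)
    show "\<psi> \<in> hom G G"
      using hm[of "Inl x" "Inl y" for x y] base by (auto simp: hom_def)
    show "inj_on \<psi> (carrier G)"
    proof (rule inj_onI)
      fix x y assume "x \<in> carrier G" "y \<in> carrier G" "\<psi> x = \<psi> y"
      then have "\<phi> (Inl x) = \<phi> (Inl y)" by (simp add: base)
      with inj \<open>x \<in> carrier G\<close> \<open>y \<in> carrier G\<close> show "x = y"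
        by (auto dest: inj_onD)
    qed
    show "\<psi> ` carrier G = carrier G"
    proof (intro equalityI subsetI)
      fix y assume "y \<in> carrier G"
      then have "Inl y \<in> \<phi> ` carrier (Gf G f1)" using surj by simp
      then obtain u where u: "u \<in> carrier (Gf G f1)" "\<phi> u = Inl y" by (metis imageE)
      then show "y \<in> \<psi> ` carrier G"
        by (cases rule: Gf_carrier_cases) (auto simp: base bar)
    qed (auto simp: base)
  qed
  then show thesis
    using that d base bar by auto
qed

text \<open>Hence an isomorphism onto a non-group yields an automorphism psi and d in G
  with psi(f1 w) = f2(d d psi(w)): compare the images of w-bar * 1-bar.\<close>

lemma Gf_iso_imp_twist:
  fixes G (structure)
  assumes G: "comm_group G" and f1_closed: "\<And>t. t \<in> carrier G \<Longrightarrow> f1 t \<in> carrier G"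
    and f2_closed: "\<And>t. t \<in> carrier G \<Longrightarrow> f2 t \<in> carrier G"
    and \<phi>: "\<phi> \<in> iso (Gf G f1) (Gf G f2)" and not_group: "\<not> group (Gf G f2)"
  shows "\<exists>\<psi> \<in> iso G G. \<exists>d \<in> carrier G. \<forall>w \<in> carrier G. \<psi> (f1 w) = f2 (d \<otimes> d \<otimes> \<psi> w)"
proof -
  interpret comm_group G by fact
  obtain \<psi> d where \<psi>: "\<psi> \<in> iso G G" and d: "d \<in> carrier G"
    and base: "\<And>x. x \<in> carrier G \<Longrightarrow> \<phi> (Inl x) = Inl (\<psi> x)"
    and bar: "\<And>x. x \<in> carrier G \<Longrightarrow> \<phi> (Inr x) = Inr (\<psi> x \<otimes> d)"
    using Gf_iso_shape[OF G f2_closed \<phi> not_group] by metis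
  text \<open>psi(1) = 1 is needed to evaluate the image of 1-bar.\<close>
  interpret \<psi>: group_hom G G \<psi>
    using \<psi> by (unfold_locales) (simp add: iso_iff)
  have "\<psi> (f1 w) = f2 (d \<otimes> d \<otimes> \<psi> w)" if w: "w \<in> carrier G" for w
  proof -
    have "\<phi> (Gf_mult G f1 (Inr w) (Inr \<one>)) = Gf_mult G f2 (\<phi> (Inr w)) (\<phi> (Inr \<one>))"
      using hom_mult[OF iso_imp_homomorphism[OF \<phi>], of "Inr w" "Inr \<one>"] w by simp
    then have "\<psi> (f1 w) = f2 (\<psi> w \<otimes> d \<otimes> d)"
      using w d base bar f1_closed by simp
    then show ?thesis using w d by (simp add: m_ac)
  qed
  with \<psi> d show ?thesis by auto
qed

lemma bij_betw_map_sum: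
  assumes f: "bij_betw f A C" and g: "bij_betw g B D"
  shows "bij_betw (map_sum f g) (Inl ` A \<union> Inr ` B) (Inl ` C \<union> Inr ` D)"
proof -
  have "map_sum f g ` (Inl ` A \<union> Inr ` B) = Inl ` (f ` A) \<union> Inr ` (g ` B)"
    by (simp add: image_Un image_image)
  moreover have "inj_on (map_sum f g) (Inl ` A \<union> Inr ` B)"
    using f g unfolding bij_betw_def inj_on_def by fastforce
  ultimately show ?thesis
    using f g by (simp add: bij_betw_def)
qed

lemma twist_imp_Gf_iso:
  fixes G (structure)
  assumes "comm_group G" and \<psi>: "\<psi> \<in> iso G G" and y: "y \<in> carrier G"
    and twist: "\<And>z. z \<in> carrier G \<Longrightarrow> \<psi> (f1 z) = f2 (y \<otimes> y \<otimes> \<psi> z)"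
  shows "map_sum \<psi> (\<lambda>x. y \<otimes> \<psi> x) \<in> iso (Gf G f1) (Gf G f2)"
proof (rule isoI)
  interpret comm_group G by fact
  let ?\<phi> = "map_sum \<psi> (\<lambda>x. y \<otimes> \<psi> x)"
  have \<psi>_closed: "\<psi> x \<in> carrier G" if "x \<in> carrier G" for x
    using hom_in_carrier[OF iso_imp_homomorphism[OF \<psi>] that] .
  have \<psi>_mult: "\<psi> (x \<otimes> z) = \<psi> x \<otimes> \<psi> z" if "x \<in> carrier G" "z \<in> carrier G" for x z
    using hom_mult[OF iso_imp_homomorphism[OF \<psi>] that] .
  have "?\<phi> (Gf_mult G f1 u v) = Gf_mult G f2 (?\<phi> u) (?\<phi> v)"
    if u: "u \<in> carrier (Gf G f1)" and v: "v \<in> carrier (Gf G f1)" for u v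
  proof -
    obtain a where a: "a \<in> carrier G" "u = Inl a \<or> u = Inr a"
      using u by (cases rule: Gf_carrier_cases) auto
    obtain b where b: "b \<in> carrier G" "v = Inl b \<or> v = Inr b"
      using v by (cases rule: Gf_carrier_cases) auto
    have ab: "\<psi> (a \<otimes> b) = \<psi> a \<otimes> \<psi> b" using a(1) b(1) by (rule \<psi>_mult)
    have "y \<otimes> \<psi> a \<otimes> (y \<otimes> \<psi> b) = y \<otimes> y \<otimes> \<psi> (a \<otimes> b)"
      using a b y by (simp add: ab \<psi>_closed m_ac)
    moreover have "\<psi> a \<otimes> (y \<otimes> \<psi> b) = y \<otimes> (\<psi> a \<otimes> \<psi> b)"
      using a b y by (simp add: \<psi>_closed m_lcomm)
    moreover have "y \<otimes> \<psi> a \<otimes> \<psi> b = y \<otimes> (\<psi> a \<otimes> \<psi> b)"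
      using a b y by (simp add: \<psi>_closed m_assoc)
    moreover have "\<psi> (f1 (a \<otimes> b)) = f2 (y \<otimes> y \<otimes> \<psi> (a \<otimes> b))"
      using a b by (simp add: twist)
    ultimately show ?thesis
      using a(2) b(2) by (auto simp: ab)
  qed
  then show "?\<phi> \<in> hom (Gf G f1) (Gf G f2)"
    using y by (auto simp: hom_def \<psi>_closed elim!: Gf_carrier_cases)
  have \<psi>_bij: "bij_betw \<psi> (carrier G) (carrier G)"
    using \<psi> by (simp add: iso_def)
  moreover have "bij_betw (\<lambda>x. y \<otimes> x) (carrier G) (carrier G)"
    using y by (simp add: bij_betw_def inj_on_cmult surj_const_mult)
  ultimately have "bij_betw (\<lambda>x. y \<otimes> \<psi> x) (carrier G) (carrier G)"
    using bij_betw_trans unfolding comp_def by metis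
  with \<psi>_bij show "bij_betw ?\<phi> (carrier (Gf G f1)) (carrier (Gf G f2))"
    unfolding Gf_def by (simp add: bij_betw_map_sum)
qed

text \<open>Isomorphism criterion in terms of the twist condition; only G(f2) needs to be
  a non-group here.\<close>

lemma Gf_iso_iff_twist:
  fixes G (structure)
  assumes "comm_group G" and "\<And>t. t \<in> carrier G \<Longrightarrow> f1 t \<in> carrier G"
    and "\<And>t. t \<in> carrier G \<Longrightarrow> f2 t \<in> carrier G" and "\<not> group (Gf G f2)"
  shows "Gf G f1 \<cong> Gf G f2 \<longleftrightarrow>
    (\<exists>\<psi> \<in> iso G G. \<exists>d \<in> carrier G. \<forall>w \<in> carrier G. \<psi> (f1 w) = f2 (d \<otimes> d \<otimes> \<psi> w))"
proof
  assume "Gf G f1 \<cong> Gf G f2"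
  then obtain \<phi> where \<phi>: "\<phi> \<in> iso (Gf G f1) (Gf G f2)"
    by (auto simp: is_iso_def)
  show "\<exists>\<psi> \<in> iso G G. \<exists>d \<in> carrier G. \<forall>w \<in> carrier G. \<psi> (f1 w) = f2 (d \<otimes> d \<otimes> \<psi> w)"
    using Gf_iso_imp_twist[OF assms(1,2,3) \<phi> assms(4)] .
next
  assume "\<exists>\<psi> \<in> iso G G. \<exists>d \<in> carrier G. \<forall>w \<in> carrier G. \<psi> (f1 w) = f2 (d \<otimes> d \<otimes> \<psi> w)"
  then obtain \<psi> d where \<psi>: "\<psi> \<in> iso G G" and d: "d \<in> carrier G"
    and twist: "\<And>w. w \<in> carrier G \<Longrightarrow> \<psi> (f1 w) = f2 (d \<otimes> d \<otimes> \<psi> w)"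
    by auto
  show "Gf G f1 \<cong> Gf G f2"
    using is_isoI[OF twist_imp_Gf_iso[OF assms(1) \<psi> d, of f1 f2, OF twist]] .
qed

lemma twist_iff_inverse_form:
  fixes G (structure)
  assumes "group G" and \<psi>: "\<psi> \<in> hom G G"
    and f1_closed: "\<And>t. t \<in> carrier G \<Longrightarrow> f1 t \<in> carrier G"
    and f2: "bij_betw f2 (carrier G) (carrier G)"
  shows "(\<exists>d \<in> carrier G. \<forall>w \<in> carrier G. \<psi> (f1 w) = f2 (d \<otimes> d \<otimes> \<psi> w)) \<longleftrightarrow>
    (\<forall>x \<in> carrier G. inv_into (carrier G) f2 (\<psi> (f1 x)) = inv_into (carrier G) f2 (\<psi> (f1 \<one>)) \<otimes> \<psi> x)
    \<and> (\<exists>d \<in> carrier G. inv_into (carrier G) f2 (\<psi> (f1 \<one>)) = d \<otimes> d)"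
proof -
  interpret group G by fact
  interpret \<psi>: group_hom G G \<psi> by unfold_locales (rule \<psi>)
  let ?g = "inv_into (carrier G) f2"
  have solve: "a = f2 v \<longleftrightarrow> ?g a = v" if "a \<in> carrier G" "v \<in> carrier G" for a v
    using f2 that by (metis bij_betw_inv_into_left bij_betw_inv_into_right)
  have \<psi>f1_closed: "\<psi> (f1 w) \<in> carrier G" if "w \<in> carrier G" for w
    using that f1_closed by simp
  let ?c = "?g (\<psi> (f1 \<one>))"
  have inverted: "\<psi> (f1 w) = f2 (d \<otimes> d \<otimes> \<psi> w) \<longleftrightarrow> ?g (\<psi> (f1 w)) = d \<otimes> d \<otimes> \<psi> w"
    if "d \<in> carrier G" "w \<in> carrier G" for d w
    using solve \<psi>f1_closed that by simp
  show ?thesis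
  proof
    assume "\<exists>d \<in> carrier G. \<forall>w \<in> carrier G. \<psi> (f1 w) = f2 (d \<otimes> d \<otimes> \<psi> w)"
    then obtain d where d: "d \<in> carrier G"
      and twist: "\<forall>w \<in> carrier G. \<psi> (f1 w) = f2 (d \<otimes> d \<otimes> \<psi> w)"
      by (rule bexE)
    have eq: "?g (\<psi> (f1 w)) = d \<otimes> d \<otimes> \<psi> w" if w: "w \<in> carrier G" for w
      using inverted[OF d w] twist w by simp
    text \<open>At w = 1 the translation constant is identified as the square d d.\<close>
    have c: "?c = d \<otimes> d"
      using eq[of \<one>] d by (simp add: \<psi>.hom_one)
    show "(\<forall>x \<in> carrier G. ?g (\<psi> (f1 x)) = ?c \<otimes> \<psi> x) \<and> (\<exists>d \<in> carrier G. ?c = d \<otimes> d)"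
      using eq c d by auto
  next
    assume "(\<forall>x \<in> carrier G. ?g (\<psi> (f1 x)) = ?c \<otimes> \<psi> x) \<and> (\<exists>d \<in> carrier G. ?c = d \<otimes> d)"
    then obtain d where d: "d \<in> carrier G" and c: "?c = d \<otimes> d"
      and eq: "\<forall>x \<in> carrier G. ?g (\<psi> (f1 x)) = ?c \<otimes> \<psi> x"
      by (elim conjE bexE)
    have "\<psi> (f1 w) = f2 (d \<otimes> d \<otimes> \<psi> w)" if w: "w \<in> carrier G" for w
      using inverted[OF d w] eq c w by simp
    with d show "\<exists>d \<in> carrier G. \<forall>w \<in> carrier G. \<psi> (f1 w) = f2 (d \<otimes> d \<otimes> \<psi> w)"
      by (intro bexI ballI)
  qed
qed

theorem proposition2p5:
  fixes G :: "('a, 'b) monoid_scheme" and f1 f2 :: "'a \<Rightarrow> 'a"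
  assumes "comm_group G"
    and "bij_betw f1 (carrier G) (carrier G)"
    and "bij_betw f2 (carrier G) (carrier G)"
    and "\<not> group (Gf G f1)"
    and "\<not> group (Gf G f2)"
  shows "Gf G f1 \<cong> Gf G f2 \<longleftrightarrow>
    (\<exists>\<psi> \<in> iso G G.
       (\<forall>x \<in> carrier G.
          inv_into (carrier G) f2 (\<psi> (f1 x)) =
            inv_into (carrier G) f2 (\<psi> (f1 \<one>\<^bsub>G\<^esub>)) \<otimes>\<^bsub>G\<^esub> \<psi> x)
     \<and> (\<exists>y \<in> carrier G. inv_into (carrier G) f2 (\<psi> (f1 \<one>\<^bsub>G\<^esub>)) = y \<otimes>\<^bsub>G\<^esub> y))"
proof -
  text \<open>Bijectivity of f1 is only used through closure; G(f1) need not be a non-group.\<close>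
  have group: "group G" using assms(1) by (simp add: comm_group_def)
  have f1_closed: "\<And>t. t \<in> carrier G \<Longrightarrow> f1 t \<in> carrier G"
    and f2_closed: "\<And>t. t \<in> carrier G \<Longrightarrow> f2 t \<in> carrier G"
    using assms(2,3) by (auto dest: bij_betwE)
  have iso_iff_twist: "Gf G f1 \<cong> Gf G f2 \<longleftrightarrow>
    (\<exists>\<psi> \<in> iso G G. \<exists>d \<in> carrier G. \<forall>w \<in> carrier G. \<psi> (f1 w) = f2 (d \<otimes>\<^bsub>G\<^esub> d \<otimes>\<^bsub>G\<^esub> \<psi> w))"
    using Gf_iso_iff_twist[OF assms(1) f1_closed f2_closed assms(5)] .
  show ?thesis
    unfolding iso_iff_twist
    using twist_iff_inverse_form[OF group iso_imp_homomorphism f1_closed assms(3)]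
    by (rule bex_cong[OF refl])
qed

end
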